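(* Let $n\ge2$, let $\mathcal{P}$ be a distribution on $\mathcal{Z}=\mathcal{X}\times\mathcal{Y}$, let $h:\mathcal{Z}^{n-1}\times\mathcal{X}\to\mathbb{R}^d$ be a deterministic prediction function having $\beta$-train stability and $\beta_1$-test stability, and let $\ell:\mathbb{R}^d\times\mathcal{Y}\to[0,1]$ be $L$-Lipschitz in its first argument: $|\ell(r,y)-\ell(r',y)|\le L\|r-r'\|$. Then \[ \mathrm{gen}(h)\le\sqrt{4c_nL\sqrt{nd\,(n\beta^2+2\beta_1^2)}},\qquad c_n=\frac{n}{n-1}. \]
   Context: For datasets $z^{n-1},\hat z^{n-1}\in\mathcal{Z}^{n-1}$ differing in at most one entry, say $z_1\ne\hat z_1$ and $z_k=\hat z_k$ for $k\ne1$: $h$ has $\beta$-train stability if $\|h(z^{n-1},x_k)-h(\hat z^{n-1},x_k)\|^2\le\beta^2$ for all $k\ne1$ (where $x_k$ is the input of $z_k$), for all such pairs; and $\beta_1$-test stability if $\|h(z^{n-1},x')-h(\hat z^{n-1},x')\|^2\le\beta_1^2$ for all $x'\in\mathcal{X}$ and all such pairs. With true loss $\mathcal{L}(h,z^m)=\mathbb{E}_{(x',y')\sim\mathcal{P}}\ell(h(z^m,x'),y')$ and empirical loss $\widehat{\mathcal{L}}(h,z^m)=\frac1m\sum_{i}\ell(h(z^m,x_i),y_i)$, $\mathrm{gen}(h)=|\mathbb{E}_{Z^{n-1}\sim\mathcal{P}^{n-1}}[\widehat{\mathcal{L}}(h,Z^{n-1})-\mathcal{L}(h,Z^{n-1})]|$.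 *)

theory Defs
  imports "HOL-Probability.Probability"
begin

text \<open>A dataset of size m is an extensional function from {..<m} to X \<times> Y.
  A prediction function h maps a dataset and an input x to a vector in R^d
  (the dimension d is CARD('d)).\<close>

definition train_stable ::
  "nat \<Rightarrow> ((nat \<Rightarrow> 'x \<times> 'y) \<Rightarrow> 'x \<Rightarrow> real^'d) \<Rightarrow> real \<Rightarrow> bool" where
  "train_stable m h \<beta> \<longleftrightarrow>
     (\<forall>z \<in> {..<m} \<rightarrow>\<^sub>E UNIV. \<forall>z' \<in> {..<m} \<rightarrow>\<^sub>E UNIV. \<forall>i<m.
        (\<forall>k<m. k \<noteq> i \<longrightarrow> z k = z' k) \<longrightarrow>
        (\<forall>k<m. k \<noteq> i \<longrightarrow> (norm (h z (fst (z k)) - h z' (fst (z k))))\<^sup>2 \<le> \<beta>\<^sup>2))"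

definition test_stable ::
  "nat \<Rightarrow> ((nat \<Rightarrow> 'x \<times> 'y) \<Rightarrow> 'x \<Rightarrow> real^'d) \<Rightarrow> real \<Rightarrow> bool" where
  "test_stable m h \<beta>\<^sub>1 \<longleftrightarrow>
     (\<forall>z \<in> {..<m} \<rightarrow>\<^sub>E UNIV. \<forall>z' \<in> {..<m} \<rightarrow>\<^sub>E UNIV. \<forall>i<m.
        (\<forall>k<m. k \<noteq> i \<longrightarrow> z k = z' k) \<longrightarrow>
        (\<forall>x'. (norm (h z x' - h z' x'))\<^sup>2 \<le> \<beta>\<^sub>1\<^sup>2))"

definition true_loss ::
  "('x \<times> 'y) measure \<Rightarrow> (real^'d \<Rightarrow> 'y \<Rightarrow> real) \<Rightarrow>
   ((nat \<Rightarrow> 'x \<times> 'y) \<Rightarrow> 'x \<Rightarrow> real^'d) \<Rightarrow> (nat \<Rightarrow> 'x \<times> 'y) \<Rightarrow> real" where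
  "true_loss P loss h z = (\<integral>w. loss (h z (fst w)) (snd w) \<partial>P)"

definition emp_loss ::
  "nat \<Rightarrow> (real^'d \<Rightarrow> 'y \<Rightarrow> real) \<Rightarrow>
   ((nat \<Rightarrow> 'x \<times> 'y) \<Rightarrow> 'x \<Rightarrow> real^'d) \<Rightarrow> (nat \<Rightarrow> 'x \<times> 'y) \<Rightarrow> real" where
  "emp_loss m loss h z = (1 / real m) * (\<Sum>i<m. loss (h z (fst (z i))) (snd (z i)))"

definition gen ::
  "nat \<Rightarrow> ('x \<times> 'y) measure \<Rightarrow> (real^'d \<Rightarrow> 'y \<Rightarrow> real) \<Rightarrow>
   ((nat \<Rightarrow> 'x \<times> 'y) \<Rightarrow> 'x \<Rightarrow> real^'d) \<Rightarrow> real" where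
  "gen m P loss h = \<bar>\<integral>z. emp_loss m loss h z - true_loss P loss h z \<partial>(PiM {..<m} (\<lambda>_. P))\<bar>"

end

theory Submission
  imports Defs
begin

text \<open>Resampling the \<open>i\<close>-th training point by an independent copy changes the prediction at
  any test input by at most \<open>\<beta>\<^sub>1\<close>, hence the loss by at most \<open>L \<beta>\<^sub>1\<close>. By exchangeability
  (Fubini), the expected loss on the \<open>i\<close>-th training point minus the true loss equals the
  expected effect of that resampling, so \<open>gen(h) \<le> L \<beta>\<^sub>1\<close>. Together with the trivial bound
  \<open>gen(h) \<le> 1\<close> this gives \<open>gen(h)\<^sup>2 \<le> L \<beta>\<^sub>1\<close>, which is dominated by the stated bound.\<close>

lemma (in prob_space) abs_integral_le_const:
  fixes f :: "'a \<Rightarrow> real"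
  assumes "\<And>x. x \<in> space M \<Longrightarrow> \<bar>f x\<bar> \<le> c"
  shows "\<bar>\<integral>x. f x \<partial>M\<bar> \<le> c"
proof -
  have "\<bar>\<integral>x. f x \<partial>M\<bar> \<le> (\<integral>x. \<bar>f x\<bar> \<partial>M)" by (rule integral_abs_bound)
  also have "\<dots> \<le> c"
  proof (cases "integrable M (\<lambda>x. \<bar>f x\<bar>)")
    case True
    then show ?thesis by (intro integral_le_const) (auto simp: assms)
  next
    case False
    obtain x where "x \<in> space M" using not_empty by blast
    with assms have "0 \<le> c" by (meson abs_ge_zero order_trans)
    with False show ?thesis by (simp add: not_integrable_integral_eq)
  qed
  finally show ?thesis .
qed

lemma (in prob_space) abs_integral_diagonal_minus_mean_le:
  fixes \<phi> :: "'a \<Rightarrow> 'a \<Rightarrow> real"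
  assumes meas: "(\<lambda>(a, b). \<phi> a b) \<in> borel_measurable (M \<Otimes>\<^sub>M M)"
    and bounded: "\<And>a b. \<bar>\<phi> a b\<bar> \<le> B"
    and close: "\<And>y w. \<bar>\<phi> y y - \<phi> w y\<bar> \<le> t"
  shows "\<bar>\<integral>y. \<phi> y y - (\<integral>w. \<phi> y w \<partial>M) \<partial>M\<bar> \<le> t"
  \<comment> \<open>Fubini swaps the arguments in the double integral, turning the left side into the
    mean of \<open>\<phi> y y - \<phi> w y\<close>.\<close>
proof -
  interpret MM: pair_sigma_finite M M ..
  interpret MM: prob_space "M \<Otimes>\<^sub>M M" by (rule prob_space_pair) (rule prob_space_axioms)+
  have meas_swap: "(\<lambda>(a, b). \<phi> b a) \<in> borel_measurable (M \<Otimes>\<^sub>M M)"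
    using measurable_compose[OF measurable_Pair[OF measurable_snd measurable_fst] meas]
    by (simp add: case_prod_beta')
  have int_diag: "integrable M (\<lambda>y. \<phi> y y)"
    using measurable_compose[OF measurable_Pair[OF measurable_ident_sets measurable_ident_sets] meas]
    by (intro integrable_const_bound[where B=B]) (auto simp: bounded)
  have int_fst: "integrable M (\<lambda>w. \<phi> w y)" if "y \<in> space M" for y
    using measurable_Pair1[OF meas that] by (intro integrable_const_bound[where B=B]) (auto simp: bounded)
  have int_mean: "integrable M (\<lambda>y. \<integral>w. \<phi> y w \<partial>M)"
    using borel_measurable_lebesgue_integral[OF meas]
    by (intro integrable_const_bound[where B=B]) (auto intro!: abs_integral_le_const simp: bounded)
  have int_mean_swap: "integrable M (\<lambda>y. \<integral>w. \<phi> w y \<partial>M)"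
    using borel_measurable_lebesgue_integral[OF meas_swap]
    by (intro integrable_const_bound[where B=B]) (auto intro!: abs_integral_le_const simp: bounded)
  have "integrable (M \<Otimes>\<^sub>M M) (\<lambda>(a, b). \<phi> a b)"
    using meas by (intro MM.integrable_const_bound[where B=B]) (auto simp: bounded)
  from MM.Fubini_integral[OF this]
  have "(\<integral>y. \<integral>w. \<phi> y w \<partial>M \<partial>M) = (\<integral>y. \<integral>w. \<phi> w y \<partial>M \<partial>M)" by simp
  then have "(\<integral>y. \<phi> y y - (\<integral>w. \<phi> y w \<partial>M) \<partial>M) = (\<integral>y. \<phi> y y - (\<integral>w. \<phi> w y \<partial>M) \<partial>M)"
    by (simp add: Bochner_Integration.integral_diff[OF int_diag int_mean]
                  Bochner_Integration.integral_diff[OF int_diag int_mean_swap])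
  also have "\<dots> = (\<integral>y. (\<integral>w. \<phi> y y - \<phi> w y \<partial>M) \<partial>M)"
    by (intro Bochner_Integration.integral_cong)
       (simp_all add: Bochner_Integration.integral_diff[OF _ int_fst] prob_space)
  finally show ?thesis
    by (simp add: abs_integral_le_const close)
qed

lemma true_loss_bounds:
  fixes loss :: "real^'d \<Rightarrow> 'y \<Rightarrow> real"
  assumes "prob_space P" and loss_bounds: "\<And>r y. 0 \<le> loss r y \<and> loss r y \<le> 1"
  shows "0 \<le> true_loss P loss h z" and "true_loss P loss h z \<le> 1"
proof -
  interpret P: prob_space P by fact
  show "0 \<le> true_loss P loss h z"
    unfolding true_loss_def by (intro integral_nonneg_AE AE_I2) (simp add: loss_bounds)
  have "\<bar>true_loss P loss h z\<bar> \<le> 1"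
    unfolding true_loss_def by (rule P.abs_integral_le_const) (use loss_bounds in force)
  then show "true_loss P loss h z \<le> 1" by simp
qed

lemma emp_loss_bounds:
  fixes loss :: "real^'d \<Rightarrow> 'y \<Rightarrow> real"
  assumes loss_bounds: "\<And>r y. 0 \<le> loss r y \<and> loss r y \<le> 1"
  shows "0 \<le> emp_loss m loss h z" and "emp_loss m loss h z \<le> 1"
proof -
  show "0 \<le> emp_loss m loss h z"
    unfolding emp_loss_def by (intro mult_nonneg_nonneg sum_nonneg) (simp_all add: loss_bounds)
  have "(\<Sum>i<m. loss (h z (fst (z i))) (snd (z i))) \<le> (\<Sum>i<m. 1)"
    by (rule sum_mono) (simp add: loss_bounds)
  then show "emp_loss m loss h z \<le> 1"
    unfolding emp_loss_def by (cases "m = 0") (simp_all add: field_simps)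
qed

lemma gen_le_1:
  fixes loss :: "real^'d \<Rightarrow> 'y \<Rightarrow> real"
  assumes "prob_space P" and loss_bounds: "\<And>r y. 0 \<le> loss r y \<and> loss r y \<le> 1"
  shows "gen m P loss h \<le> 1"
proof -
  interpret prob_space "PiM {..<m} (\<lambda>_. P)" by (rule prob_space_PiM) (simp add: assms(1))
  show ?thesis
    unfolding gen_def
    using emp_loss_bounds[of loss m h, OF loss_bounds] true_loss_bounds[of P loss h, OF assms]
    by (intro abs_integral_le_const) (smt (verit))
qed

lemma integrable_sample_loss_minus_true_loss:
  fixes loss :: "real^'d \<Rightarrow> 'y \<Rightarrow> real"
  assumes "prob_space P"
    and meas: "(\<lambda>(z, w). loss (h z (fst w)) (snd w))
               \<in> borel_measurable (PiM {..<m} (\<lambda>_. P) \<Otimes>\<^sub>M P)"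
    and loss_bounds: "\<And>r y. 0 \<le> loss r y \<and> loss r y \<le> 1"
    and "i < m"
  shows "integrable (PiM {..<m} (\<lambda>_. P))
           (\<lambda>z. loss (h z (fst (z i))) (snd (z i)) - true_loss P loss h z)"
proof -
  interpret P: prob_space P by fact
  let ?M = "PiM {..<m} (\<lambda>_. P)"
  interpret M: prob_space ?M by (rule prob_space_PiM) (simp add: assms(1))
  have "(\<lambda>z. (z, z i)) \<in> measurable ?M (?M \<Otimes>\<^sub>M P)"
    using \<open>i < m\<close>
    by (intro measurable_Pair measurable_ident_sets measurable_component_singleton) auto
  from measurable_compose[OF this meas]
  have "(\<lambda>z. loss (h z (fst (z i))) (snd (z i))) \<in> borel_measurable ?M" by simp
  moreover have "(\<lambda>z. true_loss P loss h z) \<in> borel_measurable ?M"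
    unfolding true_loss_def using P.borel_measurable_lebesgue_integral[OF meas] by simp
  moreover have "\<bar>loss (h z (fst (z i))) (snd (z i)) - true_loss P loss h z\<bar> \<le> 1" for z
    using loss_bounds[of "h z (fst (z i))" "snd (z i)"] true_loss_bounds[of P loss h z, OF assms(1) loss_bounds]
    by linarith
  ultimately show ?thesis
    by (intro M.integrable_const_bound[where B=1]) auto
qed

lemma abs_expected_sample_loss_minus_true_loss_le:
  fixes loss :: "real^'d \<Rightarrow> 'y \<Rightarrow> real"
  assumes "prob_space P"
    and meas: "(\<lambda>(z, w). loss (h z (fst w)) (snd w))
               \<in> borel_measurable (PiM {..<m} (\<lambda>_. P) \<Otimes>\<^sub>M P)"
    and test: "test_stable m h \<beta>\<^sub>1"
    and loss_bounds: "\<And>r y. 0 \<le> loss r y \<and> loss r y \<le> 1"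
    and lipschitz: "\<And>r r' y. \<bar>loss r y - loss r' y\<bar> \<le> L * norm (r - r')"
    and "0 \<le> L" and "i < m"
  shows "\<bar>\<integral>z. loss (h z (fst (z i))) (snd (z i)) - true_loss P loss h z \<partial>PiM {..<m} (\<lambda>_. P)\<bar>
          \<le> L * \<bar>\<beta>\<^sub>1\<bar>"
proof -
  interpret P: prob_space P by fact
  interpret product_sigma_finite "\<lambda>_. P" ..
  define I where "I = {..<m} - {i}"
  have I: "finite I" "i \<notin> I" "insert i I = {..<m}"
    using \<open>i < m\<close> by (auto simp: I_def)
  define F where "F z = loss (h z (fst (z i))) (snd (z i)) - true_loss P loss h z" for z
  have "integrable (PiM (insert i I) (\<lambda>_. P)) F"
    unfolding F_def I(3) by (rule integrable_sample_loss_minus_true_loss[OF assms(1) meas loss_bounds \<open>i < m\<close>])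
  from product_integral_insert[OF I(1,2) this]
  have "(\<integral>z. F z \<partial>PiM {..<m} (\<lambda>_. P)) = (\<integral>X. (\<integral>y. F (X(i:=y)) \<partial>P) \<partial>PiM I (\<lambda>_. P))"
    by (simp add: I(3))
  also have "\<bar>\<dots>\<bar> \<le> L * \<bar>\<beta>\<^sub>1\<bar>"
  proof (rule prob_space.abs_integral_le_const)
    show "prob_space (PiM I (\<lambda>_. P))" by (rule prob_space_PiM) (simp add: assms(1))
    fix X assume X: "X \<in> space (PiM I (\<lambda>_. P))"
    define \<phi> where "\<phi> a b = loss (h (X(i:=a)) (fst b)) (snd b)" for a b
    have update: "(\<lambda>a. X(i:=a)) \<in> measurable P (PiM {..<m} (\<lambda>_. P))"
      using measurable_component_update[OF X I(2)] by (simp add: I(3))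
    have "(\<lambda>(a, b). \<phi> a b) \<in> borel_measurable (P \<Otimes>\<^sub>M P)"
      unfolding \<phi>_def using measurable_compose[OF _ meas, of "\<lambda>p. (X(i:=fst p), snd p)"] update
      by (simp add: case_prod_beta')
    moreover have "\<bar>\<phi> a b\<bar> \<le> 1" for a b
      using loss_bounds[of _ "snd b"] by (simp add: \<phi>_def abs_le_iff)
    moreover have "\<bar>\<phi> y y - \<phi> w y\<bar> \<le> L * \<bar>\<beta>\<^sub>1\<bar>" for y w
    proof -
      have "X(i:=a) \<in> {..<m} \<rightarrow>\<^sub>E UNIV" for a
        using X I by (auto simp: space_PiM PiE_def extensional_def)
      then have "(norm (h (X(i:=y)) (fst y) - h (X(i:=w)) (fst y)))\<^sup>2 \<le> \<beta>\<^sub>1\<^sup>2"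
        using test \<open>i < m\<close> unfolding test_stable_def by auto
      then have "norm (h (X(i:=y)) (fst y) - h (X(i:=w)) (fst y)) \<le> \<bar>\<beta>\<^sub>1\<bar>"
        by (metis abs_ge_zero power2_abs power2_le_imp_le)
      with lipschitz[of "h (X(i:=y)) (fst y)" "snd y" "h (X(i:=w)) (fst y)"] \<open>0 \<le> L\<close>
      show ?thesis unfolding \<phi>_def by (meson mult_left_mono order_trans)
    qed
    ultimately have "\<bar>\<integral>y. \<phi> y y - (\<integral>w. \<phi> y w \<partial>P) \<partial>P\<bar> \<le> L * \<bar>\<beta>\<^sub>1\<bar>"
      by (rule P.abs_integral_diagonal_minus_mean_le)
    moreover have "F (X(i:=y)) = \<phi> y y - (\<integral>w. \<phi> y w \<partial>P)" for y
      by (simp add: F_def \<phi>_def true_loss_def)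
    ultimately show "\<bar>\<integral>y. F (X(i:=y)) \<partial>P\<bar> \<le> L * \<bar>\<beta>\<^sub>1\<bar>" by simp
  qed
  finally show ?thesis by (simp add: F_def)
qed

lemma gen_le_test_stable:
  fixes loss :: "real^'d \<Rightarrow> 'y \<Rightarrow> real"
  assumes "prob_space P"
    and meas: "(\<lambda>(z, w). loss (h z (fst w)) (snd w))
               \<in> borel_measurable (PiM {..<m} (\<lambda>_. P) \<Otimes>\<^sub>M P)"
    and test: "test_stable m h \<beta>\<^sub>1"
    and loss_bounds: "\<And>r y. 0 \<le> loss r y \<and> loss r y \<le> 1"
    and lipschitz: "\<And>r r' y. \<bar>loss r y - loss r' y\<bar> \<le> L * norm (r - r')"
    and "0 \<le> L" and "0 < m"
  shows "gen m P loss h \<le> L * \<bar>\<beta>\<^sub>1\<bar>"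
proof -
  let ?M = "PiM {..<m} (\<lambda>_. P)"
  define f where "f i z = loss (h z (fst (z i))) (snd (z i)) - true_loss P loss h z" for i z
  have "emp_loss m loss h z - true_loss P loss h z = (\<Sum>i<m. f i z) / real m" for z
    using \<open>0 < m\<close> by (simp add: emp_loss_def f_def sum_subtractf field_simps)
  then have "gen m P loss h = \<bar>\<Sum>i<m. \<integral>z. f i z \<partial>?M\<bar> / real m"
    unfolding gen_def f_def
    by (simp add: Bochner_Integration.integral_sum
                  integrable_sample_loss_minus_true_loss[OF assms(1) meas loss_bounds])
  also have "\<dots> \<le> (\<Sum>i<m. \<bar>\<integral>z. f i z \<partial>?M\<bar>) / real m"
    by (intro divide_right_mono sum_abs) simp
  also have "\<dots> \<le> (\<Sum>i<m. L * \<bar>\<beta>\<^sub>1\<bar>) / real m"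
    unfolding f_def
    by (intro divide_right_mono sum_mono abs_expected_sample_loss_minus_true_loss_le[OF assms(1-6)]) auto
  finally show ?thesis using \<open>0 < m\<close> by simp
qed

lemma lipschitz_constant_nonneg:
  fixes loss :: "real^'d \<Rightarrow> 'y \<Rightarrow> real"
  assumes "\<And>r r' y. \<bar>loss r y - loss r' y\<bar> \<le> L * norm (r - r')"
  shows "0 \<le> L"
proof -
  obtain k :: 'd and y :: 'y where True by simp
  from assms[of 0 y "axis k 1"] show ?thesis by simp
qed


theorem theorem5:
  fixes P :: "('x \<times> 'y) measure"
    and h :: "(nat \<Rightarrow> 'x \<times> 'y) \<Rightarrow> 'x \<Rightarrow> real^'d"
    and loss :: "real^'d \<Rightarrow> 'y \<Rightarrow> real"
    and n :: nat and \<beta> \<beta>\<^sub>1 L :: real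
  assumes "n \<ge> 2"
    and "prob_space P"
    and meas: "(\<lambda>(z, w). loss (h z (fst w)) (snd w))
               \<in> borel_measurable (PiM {..<n-1} (\<lambda>_. P) \<Otimes>\<^sub>M P)"
    and "train_stable (n-1) h \<beta>"
    and "test_stable (n-1) h \<beta>\<^sub>1"
    and "\<And>r y. 0 \<le> loss r y \<and> loss r y \<le> 1"
    and "\<And>r r' y. \<bar>loss r y - loss r' y\<bar> \<le> L * norm (r - r')"
  shows "gen (n-1) P loss h
           \<le> sqrt (4 * (real n / (real n - 1)) * L *
                   sqrt (real n * real CARD('d) * (real n * \<beta>\<^sup>2 + 2 * \<beta>\<^sub>1\<^sup>2)))"
proof (rule real_le_rsqrt)
  let ?g = "gen (n-1) P loss h"
  let ?S = "sqrt (real n * real CARD('d) * (real n * \<beta>\<^sup>2 + 2 * \<beta>\<^sub>1\<^sup>2))"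
  have "0 \<le> L" by (rule lipschitz_constant_nonneg) fact
  have "1 \<le> real n * real CARD('d)"
    using \<open>n \<ge> 2\<close> by (simp add: Suc_leI mult_ge1_I)
  from mult_right_mono[OF this, of "real n * \<beta>\<^sup>2 + 2 * \<beta>\<^sub>1\<^sup>2"]
  have "real n * \<beta>\<^sup>2 + 2 * \<beta>\<^sub>1\<^sup>2 \<le> real n * real CARD('d) * (real n * \<beta>\<^sup>2 + 2 * \<beta>\<^sub>1\<^sup>2)"
    by simp
  then have "\<beta>\<^sub>1\<^sup>2 \<le> real n * real CARD('d) * (real n * \<beta>\<^sup>2 + 2 * \<beta>\<^sub>1\<^sup>2)"
    by (smt (verit) zero_le_power2 mult_nonneg_nonneg of_nat_0_le_iff)
  then have "\<bar>\<beta>\<^sub>1\<bar> \<le> ?S" by (metis real_sqrt_abs real_sqrt_le_mono)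
  have "0 \<le> ?g" "?g \<le> 1"
    using gen_le_1[of P loss, OF assms(2,6)] by (simp_all add: gen_def)
  then have "?g\<^sup>2 \<le> ?g" by (simp add: power2_eq_square mult_left_le)
  also have "?g \<le> L * \<bar>\<beta>\<^sub>1\<bar>"
    using gen_le_test_stable[OF assms(2,3,5,6,7) \<open>0 \<le> L\<close>] \<open>n \<ge> 2\<close> by simp
  also have "\<dots> \<le> L * ?S"
    using \<open>\<bar>\<beta>\<^sub>1\<bar> \<le> ?S\<close> \<open>0 \<le> L\<close> by (rule mult_left_mono)
  also have "\<dots> \<le> 4 * (real n / (real n - 1)) * L * ?S"
    using \<open>n \<ge> 2\<close> \<open>0 \<le> L\<close> by (simp add: field_simps mult_right_mono)
  finally show "?g\<^sup>2 \<le> 4 * (real n / (real n - 1)) * L * ?S" .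
qed
end
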